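(* Let $W$ be an eventually periodic subset of $\mathbb{Z}^d$ with periods $u_1,\dots,u_d$, and let $\mathscr{W},\mathcal{W},\mathscr{W}_1$ be as defined in the context. Let $M$ be a minimal complement of $W$ in $\mathbb{Z}^d$. Let $M_\infty$ be the union of those fibres $M_{\bar v}$ ($\bar v\in\mathbb{Z}^d/\mathcal{L}$) such that for every real $N$ there exists $x\in M_{\bar v}$ all of whose coordinates with respect to $u_1,\dots,u_d$ are $\leqslant N$. Let $\mathcal{M}\subseteq M_\infty$ be such that $\pi$ restricts to a bijection $\mathcal{M}\to\pi(M_\infty)$. Then: (1) $M_\infty$ is infinite, $\mathcal{M}$ is a nonempty finite set, $\mathscr{W}_1$ is nonempty, and $\pi(\mathcal{M}+(\mathcal{W}\cup\mathscr{W}_1))=\mathbb{Z}^d/\mathcal{L}$. (2) For every $m\in\mathcal{M}$ there exists $w\in\mathscr{W}_1$ such that $m+w\not\equiv m'+w'\pmod{\mathcal{L}}$ for all $m'\in\mathcal{M}$ and all $w'\in\mathcal{W}$.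
   Context: $d\geqslant1$, $\mathbb{N}=\{0,1,2,\dots\}$. Let $u_1,\dots,u_d\in\mathbb{Z}^d$ satisfy no nontrivial $\mathbb{Z}$-linear relation, $\mathcal{L}=\mathbb{Z}u_1+\dots+\mathbb{Z}u_d$, $P=\mathbb{N}u_1+\dots+\mathbb{N}u_d$, $\pi:\mathbb{Z}^d\to\mathbb{Z}^d/\mathcal{L}$ the quotient map, and $X_{\bar v}=X\cap\pi^{-1}(\bar v)$. Coordinates of $x\in\mathbb{Z}^d$ with respect to $u_1,\dots,u_d$ are the unique $t_i\in\mathbb{Q}$ with $x=\sum t_iu_i$. A nonempty $X\subseteq\mathbb{Z}^d$ is eventually periodic with periods $u_1,\dots,u_d$ if $X\subseteq F+P$ for some nonempty finite $F\subseteq\mathbb{Z}^d$ and $x+P\subseteq X$ for all but finitely many $x\in X$. For such $W$: $\mathscr{W}=\{w\in W:w+P\not\subseteq W\}$; $\mathcal{W}=\{w\in W\setminus\mathscr{W}:(w-P)\cap(W\setminus\mathscr{W})=\{w\}\}$; $\mathscr{W}_1$ is the set of elements of $\mathscr{W}$ congruent modulo $\mathcal{L}$ to no element of $\mathcal{W}$. A nonempty $M\subseteq\mathbb{Z}^d$ is a complement of $W$ if $M+W=\mathbb{Z}^d$, and a minimal complement if no proper subset of $M$ is a complement of $W$. *)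

theory Defs
  imports "HOL-Analysis.Finite_Cartesian_Product"
begin

text \<open>Z^d is modelled as int ^ 'd for a finite index type 'd (so d = CARD('d) >= 1);
  the periods u_1..u_d are a family u :: 'd => int ^ 'd.\<close>

definition lincomb :: "('d::finite \<Rightarrow> int ^ 'd) \<Rightarrow> ('d \<Rightarrow> int) \<Rightarrow> int ^ 'd" where
  "lincomb u c = (\<chi> j. \<Sum>i\<in>UNIV. c i * (u i $ j))"

definition no_Z_relation :: "('d::finite \<Rightarrow> int ^ 'd) \<Rightarrow> bool" where
  "no_Z_relation u \<longleftrightarrow> (\<forall>c. lincomb u c = 0 \<longrightarrow> (\<forall>i. c i = 0))"

definition Lat :: "('d::finite \<Rightarrow> int ^ 'd) \<Rightarrow> (int ^ 'd) set" where
  "Lat u = {lincomb u c | c. True}"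

definition Pcone :: "('d::finite \<Rightarrow> int ^ 'd) \<Rightarrow> (int ^ 'd) set" where
  "Pcone u = {lincomb u c | c. \<forall>i. c i \<ge> 0}"

definition qmap :: "('d::finite \<Rightarrow> int ^ 'd) \<Rightarrow> int ^ 'd \<Rightarrow> (int ^ 'd) set" where
  "qmap u x = {y. x - y \<in> Lat u}"

definition sumset :: "('a::plus) set \<Rightarrow> 'a set \<Rightarrow> 'a set" where
  "sumset A B = {a + b | a b. a \<in> A \<and> b \<in> B}"

definition coords_le :: "('d::finite \<Rightarrow> int ^ 'd) \<Rightarrow> int ^ 'd \<Rightarrow> real \<Rightarrow> bool" where
  "coords_le u x N \<longleftrightarrow> (\<exists>t::'d \<Rightarrow> rat.
      (\<forall>j. of_int (x $ j) = (\<Sum>i\<in>UNIV. t i * of_int (u i $ j))) \<and> (\<forall>i. of_rat (t i) \<le> N))"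

definition eventually_periodic :: "('d::finite \<Rightarrow> int ^ 'd) \<Rightarrow> (int ^ 'd) set \<Rightarrow> bool" where
  "eventually_periodic u X \<longleftrightarrow> X \<noteq> {} \<and>
     (\<exists>F. finite F \<and> F \<noteq> {} \<and> X \<subseteq> sumset F (Pcone u)) \<and>
     finite {x \<in> X. \<not> ((\<lambda>p. x + p) ` Pcone u \<subseteq> X)}"

definition scrW :: "('d::finite \<Rightarrow> int ^ 'd) \<Rightarrow> (int ^ 'd) set \<Rightarrow> (int ^ 'd) set" where
  "scrW u W = {w \<in> W. \<not> ((\<lambda>p. w + p) ` Pcone u \<subseteq> W)}"

definition calW :: "('d::finite \<Rightarrow> int ^ 'd) \<Rightarrow> (int ^ 'd) set \<Rightarrow> (int ^ 'd) set" where
  "calW u W = {w \<in> W - scrW u W. (\<lambda>p. w - p) ` Pcone u \<inter> (W - scrW u W) = {w}}"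

definition scrW1 :: "('d::finite \<Rightarrow> int ^ 'd) \<Rightarrow> (int ^ 'd) set \<Rightarrow> (int ^ 'd) set" where
  "scrW1 u W = {w \<in> scrW u W. \<forall>w' \<in> calW u W. qmap u w \<noteq> qmap u w'}"

definition is_complement :: "('a::plus) set \<Rightarrow> 'a set \<Rightarrow> bool" where
  "is_complement M W \<longleftrightarrow> M \<noteq> {} \<and> sumset M W = UNIV"

definition is_minimal_complement :: "('a::plus) set \<Rightarrow> 'a set \<Rightarrow> bool" where
  "is_minimal_complement M W \<longleftrightarrow> is_complement M W \<and> (\<forall>M'. M' \<subset> M \<longrightarrow> \<not> is_complement M' W)"

definition Minf :: "('d::finite \<Rightarrow> int ^ 'd) \<Rightarrow> (int ^ 'd) set \<Rightarrow> (int ^ 'd) set" where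
  "Minf u M = \<Union>{M \<inter> qmap u -` {v} | v. v \<in> range (qmap u) \<and>
        (\<forall>N::real. \<exists>x \<in> M \<inter> qmap u -` {v}. coords_le u x N)}"

end

theory Submission
  imports Defs "HOL-Analysis.Cartesian_Space"
begin

text \<open>Everything is read off rational coordinates with respect to u: since the u i are
  linearly independent, the period matrix is invertible over the rationals, L and P become the
  points with integral, resp. integral nonnegative, coordinates, and a common denominator D gives
  D Z^d \<subseteq> L, so Z^d/L is finite.

  The class of an element m of M_infinity contains points of M arbitrarily far down the cone, so
  for a periodic point w (w + P \<subseteq> W) every z + w with z \<equiv> m is covered by (M - {m}) + W.
  Minimality of M yields w \<in> W with m + w covered only by m itself; hence m + w is congruent to no
  m' + w' with m' \<in> M_infinity and w' periodic, which forces w into scrW1 u W. For the covering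
  statement, some class y - w (w \<in> W) meets M_infinity, and every w \<in> W is congruent to a point
  of calW u W \<union> scrW1 u W, because a periodic point dominates a cone-minimal periodic point.\<close>

lemma rat_common_denominator:
  assumes "finite (S :: rat set)"
  shows "\<exists>D::int. 0 < D \<and> (\<forall>q\<in>S. of_int D * q \<in> \<int>)"
  using assms
proof (induction S rule: finite_induct)
  case empty
  show ?case by (intro exI[of _ 1]) simp
next
  case (insert q S)
  then obtain D :: int where D: "0 < D" "\<forall>r\<in>S. of_int D * r \<in> \<int>" by blast
  obtain a b where "quotient_of q = (a, b)" by fastforce
  then have b: "0 < b" "q = of_int a / of_int b"
    using quotient_of_denom_pos quotient_of_div by blast+
  have "of_int (b * D) * r \<in> \<int>" if "r \<in> insert q S" for r
  proof (cases "r = q")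
    case True
    then have "of_int (b * D) * r = of_int (D * a)" using b by simp
    then show ?thesis by (simp only: Ints_of_int)
  next
    case False
    then have "of_int D * r \<in> \<int>" using D(2) that by blast
    then have "of_int b * (of_int D * r) \<in> \<int>" by simp
    then show ?thesis by (simp add: mult.assoc)
  qed
  then show ?case using D(1) b(1) by (intro exI[of _ "b * D"]) auto
qed

definition rat_vec :: "int ^ 'n \<Rightarrow> rat ^ 'n" where
  "rat_vec x = (\<chi> j. of_int (x $ j))"

lemma rat_vec_add: "rat_vec (x + y) = rat_vec x + rat_vec y"
  by (simp add: rat_vec_def vec_eq_iff)

lemma rat_vec_diff: "rat_vec (x - y) = rat_vec x - rat_vec y"
  by (simp add: rat_vec_def vec_eq_iff)

lemma rat_vec_zero: "rat_vec 0 = 0"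
  by (simp add: rat_vec_def vec_eq_iff)

lemma rat_vec_inject: "rat_vec x = rat_vec y \<longleftrightarrow> x = y"
  by (simp add: rat_vec_def vec_eq_iff)

definition basis_matrix :: "('d::finite \<Rightarrow> int ^ 'd) \<Rightarrow> rat ^ 'd ^ 'd" where
  "basis_matrix u = (\<chi> j i. of_int (u i $ j))"

lemma rat_vec_lincomb: "rat_vec (lincomb u c) = basis_matrix u *v (\<chi> i. of_int (c i))"
  by (simp add: rat_vec_def lincomb_def basis_matrix_def matrix_vector_mult_def vec_eq_iff mult.commute)

lemma lincomb_add: "lincomb u c + lincomb u c' = lincomb u (\<lambda>i. c i + c' i)"
  by (simp add: lincomb_def vec_eq_iff algebra_simps sum.distrib)

lemma lincomb_diff: "lincomb u c - lincomb u c' = lincomb u (\<lambda>i. c i - c' i)"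
  by (simp add: lincomb_def vec_eq_iff algebra_simps sum_subtractf)

lemma lincomb_zero: "lincomb u (\<lambda>_. 0) = 0"
  by (simp add: lincomb_def vec_eq_iff)

text \<open>Junk unless no_Z_relation u holds, when the matrix is invertible.\<close>
definition coords :: "('d::finite \<Rightarrow> int ^ 'd) \<Rightarrow> int ^ 'd \<Rightarrow> rat ^ 'd" where
  "coords u x = matrix_inv (basis_matrix u) *v rat_vec x"

lemma coords_add: "coords u (x + y) = coords u x + coords u y"
  by (simp add: coords_def rat_vec_add matrix_vector_right_distrib)

lemma coords_diff: "coords u (x - y) = coords u x - coords u y"
  by (simp add: coords_def rat_vec_diff matrix_vector_mult_diff_distrib)

lemma coords_zero: "coords u 0 = 0"
  by (simp add: coords_def rat_vec_zero)

lemma Lat_zero: "0 \<in> Lat u"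
  using lincomb_zero by (auto simp: Lat_def)

lemma Lat_add: "x \<in> Lat u \<Longrightarrow> y \<in> Lat u \<Longrightarrow> x + y \<in> Lat u"
  by (auto simp: Lat_def lincomb_add)

lemma Lat_diff: "x \<in> Lat u \<Longrightarrow> y \<in> Lat u \<Longrightarrow> x - y \<in> Lat u"
  by (auto simp: Lat_def lincomb_diff)

lemma lincomb_in_Lat: "lincomb u c \<in> Lat u"
  by (auto simp: Lat_def)

lemma Pcone_subset_Lat: "Pcone u \<subseteq> Lat u"
  by (auto simp: Pcone_def Lat_def)

lemma Pcone_zero: "0 \<in> Pcone u"
  using lincomb_zero by (force simp: Pcone_def)

lemma Pcone_add: "p \<in> Pcone u \<Longrightarrow> q \<in> Pcone u \<Longrightarrow> p + q \<in> Pcone u"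
  by (force simp: Pcone_def lincomb_add)

lemma qmap_eq_iff: "qmap u x = qmap u y \<longleftrightarrow> x - y \<in> Lat u"
proof
  assume "qmap u x = qmap u y"
  then show "x - y \<in> Lat u" using Lat_zero by (auto simp: qmap_def set_eq_iff)
next
  assume xy: "x - y \<in> Lat u"
  have "x - z \<in> Lat u \<longleftrightarrow> y - z \<in> Lat u" for z
    using xy Lat_add[OF xy, of "y - z"] Lat_diff[of "x - z" u "x - y"] by auto
  then show "qmap u x = qmap u y" by (simp add: qmap_def)
qed

lemma qmap_add_cong:
  "qmap u x = qmap u x' \<Longrightarrow> qmap u y = qmap u y' \<Longrightarrow> qmap u (x + y) = qmap u (x' + y')"
  using Lat_add[of "x - x'" u "y - y'"] by (simp add: qmap_eq_iff algebra_simps)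

lemma qmap_diff_cong:
  "qmap u x = qmap u x' \<Longrightarrow> qmap u y = qmap u y' \<Longrightarrow> qmap u (x - y) = qmap u (x' - y')"
  using Lat_diff[of "x - x'" u "y - y'"] by (simp add: qmap_eq_iff algebra_simps)

lemma coords_le_mono: "coords_le u x N \<Longrightarrow> N \<le> N' \<Longrightarrow> coords_le u x N'"
  unfolding coords_le_def by (meson order.trans)

lemma Minf_iff: "x \<in> Minf u M \<longleftrightarrow> x \<in> M \<and> (\<forall>N. \<exists>y\<in>M. qmap u y = qmap u x \<and> coords_le u y N)"
proof
  assume "x \<in> Minf u M"
  then obtain v where "x \<in> M" "qmap u x = v" "\<forall>N. \<exists>y\<in>M \<inter> qmap u -` {v}. coords_le u y N"
    unfolding Minf_def by auto
  then show "x \<in> M \<and> (\<forall>N. \<exists>y\<in>M. qmap u y = qmap u x \<and> coords_le u y N)"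
    by auto
next
  assume x: "x \<in> M \<and> (\<forall>N. \<exists>y\<in>M. qmap u y = qmap u x \<and> coords_le u y N)"
  then have "M \<inter> qmap u -` {qmap u x} \<in> {M \<inter> qmap u -` {v} | v. v \<in> range (qmap u) \<and>
      (\<forall>N. \<exists>y\<in>M \<inter> qmap u -` {v}. coords_le u y N)}"
    by (intro CollectI exI[of _ "qmap u x"]) (simp add: Bex_def)
  then show "x \<in> Minf u M" unfolding Minf_def using x by auto
qed

lemma Minf_class_closed: "m \<in> Minf u M \<Longrightarrow> x \<in> M \<Longrightarrow> qmap u x = qmap u m \<Longrightarrow> x \<in> Minf u M"
  by (simp add: Minf_iff)

lemma Minf_class_iff:
  "(\<exists>m\<in>Minf u M. qmap u m = qmap u z) \<longleftrightarrow> (\<forall>N. \<exists>x\<in>M. qmap u x = qmap u z \<and> coords_le u x N)"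
proof
  assume "\<exists>m\<in>Minf u M. qmap u m = qmap u z"
  then show "\<forall>N. \<exists>x\<in>M. qmap u x = qmap u z \<and> coords_le u x N" by (auto simp: Minf_iff)
next
  assume low: "\<forall>N. \<exists>x\<in>M. qmap u x = qmap u z \<and> coords_le u x N"
  then obtain x where "x \<in> M" "qmap u x = qmap u z" by blast
  moreover from this have "x \<in> Minf u M" using low by (simp add: Minf_iff)
  ultimately show "\<exists>m\<in>Minf u M. qmap u m = qmap u z" by blast
qed

lemma calW_subset: "calW u W \<subseteq> W - scrW u W"
  by (auto simp: calW_def)

lemma minimal_complement_essential:
  assumes "is_minimal_complement M W" "m \<in> M"
  shows "\<exists>w\<in>W. m + w \<notin> sumset (M - {m}) W"
proof -
  have "M - {m} \<subset> M" using assms(2) by blast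
  then have "\<not> is_complement (M - {m}) W" using assms(1) by (simp add: is_minimal_complement_def)
  moreover have "sumset {} W \<noteq> UNIV" by (simp add: sumset_def)
  ultimately obtain x where x: "x \<notin> sumset (M - {m}) W" by (metis UNIV_eq_I is_complement_def)
  have "x \<in> sumset M W" using assms(1) by (simp add: is_minimal_complement_def is_complement_def)
  then obtain m' w where "m' \<in> M" "w \<in> W" "x = m' + w" by (auto simp: sumset_def)
  moreover from this have "m' = m" using x by (auto simp: sumset_def)
  ultimately show ?thesis using x by blast
qed

context
  fixes u :: "'d::finite \<Rightarrow> int ^ 'd"
  assumes nz: "no_Z_relation u"
begin

lemma basis_matrix_invertible: "invertible (basis_matrix u)"
  unfolding invertible_left_inverse matrix_left_invertible_ker
proof (intro allI impI)
  fix t assume t: "basis_matrix u *v t = 0"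
  obtain D :: int where D: "0 < D" "\<forall>q\<in>range (($) t). of_int D * q \<in> \<int>"
    using rat_common_denominator[of "range (($) t)"] by auto
  define c where "c i = \<lfloor>of_int D * t $ i\<rfloor>" for i
  have c: "(\<chi> i. of_int (c i)) = of_int D *s t"
    using D(2) by (simp add: c_def vec_eq_iff)
  have "rat_vec (lincomb u c) = of_int D *s (basis_matrix u *v t)"
    by (simp add: rat_vec_lincomb c vector_scalar_commute)
  also have "\<dots> = rat_vec 0" by (simp add: t rat_vec_zero)
  finally have "\<forall>i. c i = 0" using nz by (simp add: rat_vec_inject no_Z_relation_def)
  then show "t = 0" using c D(1) by (simp add: vec_eq_iff)
qed

lemma basis_matrix_inverse:
  "basis_matrix u ** matrix_inv (basis_matrix u) = mat 1"
  "matrix_inv (basis_matrix u) ** basis_matrix u = mat 1"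
  using someI_ex[OF basis_matrix_invertible[unfolded invertible_def]]
  by (simp_all add: matrix_inv_def)

lemma coords_eq_iff: "coords u x = t \<longleftrightarrow> basis_matrix u *v t = rat_vec x"
  by (metis coords_def basis_matrix_inverse matrix_vector_mul_assoc matrix_vector_mul_lid)

lemma coords_inject: "coords u x = coords u y \<longleftrightarrow> x = y"
  by (metis coords_eq_iff rat_vec_inject)

lemma coords_lincomb: "coords u (lincomb u c) = (\<chi> i. of_int (c i))"
  by (simp add: coords_eq_iff rat_vec_lincomb)

lemma coords_integral_imp_lincomb:
  assumes "\<forall>i. coords u x $ i \<in> \<int>"
  shows "x = lincomb u (\<lambda>i. \<lfloor>coords u x $ i\<rfloor>)"
  using assms by (simp flip: coords_inject add: coords_lincomb vec_eq_iff)

lemma Lat_iff_coords: "x \<in> Lat u \<longleftrightarrow> (\<forall>i. coords u x $ i \<in> \<int>)"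
  using coords_integral_imp_lincomb by (auto simp: Lat_def coords_lincomb)

lemma Pcone_iff_coords: "x \<in> Pcone u \<longleftrightarrow> x \<in> Lat u \<and> (\<forall>i. 0 \<le> coords u x $ i)"
proof
  assume "x \<in> Pcone u"
  then show "x \<in> Lat u \<and> (\<forall>i. 0 \<le> coords u x $ i)"
    by (auto simp: Pcone_def Lat_def coords_lincomb)
next
  assume "x \<in> Lat u \<and> (\<forall>i. 0 \<le> coords u x $ i)"
  then show "x \<in> Pcone u"
    unfolding Pcone_def Lat_iff_coords
    by (auto intro!: exI[of _ "\<lambda>i. \<lfloor>coords u x $ i\<rfloor>"] coords_integral_imp_lincomb)
qed

lemma coords_le_iff: "coords_le u x N \<longleftrightarrow> (\<forall>i. of_rat (coords u x $ i) \<le> N)"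
proof -
  have "(\<forall>j. of_int (x $ j) = (\<Sum>i\<in>UNIV. t i * of_int (u i $ j))) \<longleftrightarrow> coords u x = vec_lambda t"
    for t :: "'d \<Rightarrow> rat"
    unfolding coords_eq_iff
    by (auto simp: rat_vec_def basis_matrix_def matrix_vector_mult_def vec_eq_iff mult.commute)
  then show ?thesis
    unfolding coords_le_def by (auto intro!: exI[of _ "($) (coords u x)"])
qed

lemma multiples_in_Lat: "\<exists>D::int. 0 < D \<and> (\<forall>z. D *s z \<in> Lat u)"
proof -
  define A where "A = matrix_inv (basis_matrix u)"
  obtain D :: int where D: "0 < D" "\<forall>q\<in>range (\<lambda>(i, j). A $ i $ j). of_int D * q \<in> \<int>"
    using rat_common_denominator[of "range (\<lambda>(i, j). A $ i $ j)"] by auto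
  have "coords u (D *s z) $ i \<in> \<int>" for z i
  proof -
    have "coords u (D *s z) $ i = (\<Sum>j\<in>UNIV. (of_int D * A $ i $ j) * of_int (z $ j))"
      by (simp add: coords_def A_def rat_vec_def matrix_vector_mult_def mult_ac)
    also have "\<dots> \<in> \<int>"
      by (rule Ints_sum, rule Ints_mult) (use D(2) in auto)
    finally show ?thesis .
  qed
  then show ?thesis using D(1) by (auto simp: Lat_iff_coords)
qed

lemma finite_range_qmap: "finite (range (qmap u))"
proof -
  obtain D :: int where D: "0 < D" "\<And>z. D *s z \<in> Lat u" using multiples_in_Lat by blast
  have "qmap u x \<in> qmap u ` vec_lambda ` Pi UNIV (\<lambda>_. {0..<D})" for x
  proof -
    have "x - (\<chi> j. x $ j mod D) = D *s (\<chi> j. x $ j div D)"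
      by (simp add: vec_eq_iff minus_mod_eq_mult_div)
    then have "qmap u x = qmap u (\<chi> j. x $ j mod D)" using D(2) by (simp add: qmap_eq_iff)
    moreover have "(\<lambda>j. x $ j mod D) \<in> Pi UNIV (\<lambda>_. {0..<D})" using D(1) by simp
    ultimately show ?thesis by blast
  qed
  then have "range (qmap u) \<subseteq> qmap u ` vec_lambda ` Pi UNIV (\<lambda>_. {0..<D})" by blast
  moreover have "finite (Pi UNIV (\<lambda>_::'d. {0..<D}))"
    using finite_PiE[of "UNIV :: 'd set" "\<lambda>_. {0..<D}"] by (simp add: PiE_UNIV_domain)
  ultimately show ?thesis by (meson finite_imageI finite_subset)
qed

lemma Pcone_interval_finite: "finite {x. x - a \<in> Pcone u \<and> b - x \<in> Pcone u}"
proof -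
  define K where "K i = \<lceil>coords u (b - a) $ i\<rceil>" for i
  have "x \<in> (\<lambda>c. a + lincomb u c) ` Pi UNIV (\<lambda>i. {0..K i})"
    if "x - a \<in> Pcone u" "b - x \<in> Pcone u" for x
  proof -
    have xa: "x - a \<in> Lat u" "\<forall>i. 0 \<le> coords u (x - a) $ i" "\<forall>i. 0 \<le> coords u (b - x) $ i"
      using that by (simp_all add: Pcone_iff_coords)
    have "b - a = (b - x) + (x - a)" by simp
    then have "coords u (x - a) $ i \<le> coords u (b - a) $ i" for i
      using xa(3) by (simp add: coords_add[of u "b - x" "x - a", folded \<open>b - a = _\<close>])
    then have "\<lfloor>coords u (x - a) $ i\<rfloor> \<le> K i" for i
      unfolding K_def by (meson floor_le_ceiling floor_mono order.trans)
    then have "(\<lambda>i. \<lfloor>coords u (x - a) $ i\<rfloor>) \<in> Pi UNIV (\<lambda>i. {0..K i})"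
      using xa(2) by simp
    moreover have "x = a + lincomb u (\<lambda>i. \<lfloor>coords u (x - a) $ i\<rfloor>)"
      using coords_integral_imp_lincomb[of "x - a"] xa(1) by (simp add: Lat_iff_coords)
    ultimately show ?thesis by blast
  qed
  moreover have "finite (Pi UNIV (\<lambda>i::'d. {0..K i}))"
    using finite_PiE[of "UNIV :: 'd set" "\<lambda>i. {0..K i}"] by (simp add: PiE_UNIV_domain)
  ultimately show ?thesis by (blast intro: finite_subset finite_imageI)
qed

lemma Pcone_coords_sum_pos:
  assumes "p \<in> Pcone u" "p \<noteq> 0"
  shows "0 < (\<Sum>i\<in>UNIV. coords u p $ i)"
proof -
  have nonneg: "\<forall>i. 0 \<le> coords u p $ i" using assms(1) by (simp add: Pcone_iff_coords)
  have "coords u p \<noteq> coords u 0" using assms(2) by (simp add: coords_inject)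
  then have "\<not> (\<forall>i. coords u p $ i = 0)" by (simp add: coords_zero vec_eq_iff)
  then show ?thesis
    using nonneg sum_nonneg_eq_0_iff[of UNIV "\<lambda>i. coords u p $ i"] sum_nonneg[of UNIV "\<lambda>i. coords u p $ i"]
    by fastforce
qed

lemma Minf_element_below:
  assumes "m \<in> Minf u M" "qmap u z = qmap u m" "finite S"
  obtains m' where "m' \<in> M - S" "qmap u m' = qmap u m" "z - m' \<in> Pcone u"
proof -
  define C where "C = (\<lambda>(s, i). of_rat (coords u s $ i) :: real) ` (insert z S \<times> UNIV)"
  have "finite C" using assms(3) by (simp add: C_def)
  then obtain L where L: "\<forall>c\<in>C. L \<le> c" using bdd_below_finite unfolding bdd_below_def by blast
  obtain m' where m': "m' \<in> M" "qmap u m' = qmap u m" "coords_le u m' (L - 1)"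
    using assms(1) by (auto simp: Minf_iff)
  have below: "coords u m' $ i < coords u s $ i" if "s \<in> insert z S" for s i
  proof -
    have "of_rat (coords u m' $ i) \<le> L - 1" using m'(3) by (simp add: coords_le_iff)
    moreover have "L \<le> of_rat (coords u s $ i)" using L that by (auto simp: C_def)
    ultimately have "(of_rat (coords u m' $ i) :: real) < of_rat (coords u s $ i)" by linarith
    then show ?thesis by (simp only: of_rat_less)
  qed
  have "m' \<notin> S" using below[of m' undefined] by blast
  moreover have "z - m' \<in> Lat u" using assms(2) m'(2) by (simp flip: qmap_eq_iff)
  then have "z - m' \<in> Pcone u"
    using below[of z] by (simp add: Pcone_iff_coords coords_diff less_imp_le)
  ultimately show ?thesis using that m'(1,2) by blast
qed

lemma infinite_Minf:
  assumes "Minf u M \<noteq> {}"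
  shows "infinite (Minf u M)"
proof
  assume fin: "finite (Minf u M)"
  obtain m where m: "m \<in> Minf u M" using assms by blast
  obtain m' where "m' \<in> M - Minf u M" "qmap u m' = qmap u m"
    using Minf_element_below[OF m refl fin] by blast
  then show False using Minf_class_closed[OF m] by blast
qed

lemma Minf_class_add_periodic_mem_sumset:
  assumes "m \<in> Minf u M" "qmap u z = qmap u m" "w \<in> W - scrW u W"
  shows "z + w \<in> sumset (M - {m0}) W"
proof -
  obtain m' where m': "m' \<in> M - {m0}" "z - m' \<in> Pcone u"
    using Minf_element_below[OF assms(1,2), of "{m0}"] by blast
  have "w + (z - m') \<in> W" using assms(3) m'(2) by (auto simp: scrW_def)
  moreover have "z + w = m' + (w + (z - m'))" by simp
  ultimately show ?thesis using m'(1) unfolding sumset_def by blast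
qed

lemma calW_below:
  assumes "finite F" "W \<subseteq> sumset F (Pcone u)" "w \<in> W - scrW u W"
  shows "\<exists>w0\<in>calW u W. w - w0 \<in> Pcone u"
proof -
  define T where "T = {v \<in> W - scrW u W. w - v \<in> Pcone u}"
  define \<mu> where "\<mu> v = (\<Sum>i\<in>UNIV. coords u v $ i)" for v
  have "T \<subseteq> (\<Union>f\<in>F. {x. x - f \<in> Pcone u \<and> w - x \<in> Pcone u})"
  proof
    fix v assume v: "v \<in> T"
    then obtain f p where "f \<in> F" "p \<in> Pcone u" "v = f + p"
      using assms(2) by (auto simp: T_def sumset_def)
    then have "f \<in> F" "v - f \<in> Pcone u" by simp_all
    moreover have "w - v \<in> Pcone u" using v by (simp add: T_def)
    ultimately show "v \<in> (\<Union>f\<in>F. {x. x - f \<in> Pcone u \<and> w - x \<in> Pcone u})"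
      by blast
  qed
  then have "finite T" using assms(1) Pcone_interval_finite by (meson finite_UN_I finite_subset)
  moreover have "w \<in> T" using assms(3) Pcone_zero by (simp add: T_def)
  txt \<open>A point of T with least coordinate sum is cone-minimal in W - scrW u W, since nonzero
    elements of P have positive coordinate sum.\<close>
  ultimately obtain w0 where "w0 \<in> T" and least: "\<not> (\<exists>v\<in>T. \<mu> v < \<mu> w0)"
    using arg_min_if_finite[of T \<mu>] by blast
  then have w0W: "w0 \<in> W - scrW u W" and "w - w0 \<in> Pcone u" by (simp_all add: T_def)
  have "v = w0" if "p \<in> Pcone u" "v = w0 - p" "v \<in> W - scrW u W" for p v
  proof (rule ccontr)
    assume "v \<noteq> w0"
    then have "p \<noteq> 0" using that(2) by simp
    have "w - v = (w - w0) + p" using that(2) by simp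
    with Pcone_add[OF \<open>w - w0 \<in> Pcone u\<close> that(1)] have "w - v \<in> Pcone u" by (simp only:)
    then have "v \<in> T" using that(3) by (simp add: T_def)
    moreover have "\<mu> v = \<mu> w0 - (\<Sum>i\<in>UNIV. coords u p $ i)"
      using that(2) by (simp add: \<mu>_def coords_diff sum_subtractf)
    ultimately show False using least Pcone_coords_sum_pos[OF that(1) \<open>p \<noteq> 0\<close>] by auto
  qed
  then have "(\<lambda>p. w0 - p) ` Pcone u \<inter> (W - scrW u W) = {w0}"
    using rev_image_eqI[OF Pcone_zero, of w0 "\<lambda>p. w0 - p"] w0W by auto
  then show ?thesis using w0W \<open>w - w0 \<in> Pcone u\<close> by (auto simp: calW_def)
qed

lemma W_congruent_calW_or_scrW1:
  assumes "finite F" "W \<subseteq> sumset F (Pcone u)" "w \<in> W"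
  shows "\<exists>w'\<in>calW u W \<union> scrW1 u W. qmap u w' = qmap u w"
proof (cases "w \<in> scrW u W")
  case True
  show ?thesis
  proof (cases "\<exists>w'\<in>calW u W. qmap u w' = qmap u w")
    case False
    then have "w \<in> scrW1 u W" using True by (auto simp: scrW1_def)
    then show ?thesis by blast
  qed blast
next
  case False
  then obtain w0 where "w0 \<in> calW u W" "w - w0 \<in> Lat u"
    using calW_below[OF assms(1,2)] assms(3) Pcone_subset_Lat by blast
  then show ?thesis by (metis UnI1 qmap_eq_iff)
qed

text \<open>If no class y - W met M_infinity, the fibres of M over the finitely many relevant classes
  would be uniformly bounded below; but y shifted far down the cone is still covered by M + W,
  which puts an element of M below that bound.\<close>
lemma Minf_meets_class_minus_W:
  assumes "sumset M W = UNIV" "finite F" "W \<subseteq> sumset F (Pcone u)"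
  shows "\<exists>w\<in>W. \<exists>m\<in>Minf u M. qmap u m = qmap u (y - w)"
proof (rule ccontr)
  assume none: "\<not> ?thesis"
  define A where "A = {f \<in> F. \<exists>w\<in>W. qmap u w = qmap u f}"
  have "eventually (\<lambda>N. \<forall>x\<in>M. qmap u x = qmap u (y - f) \<longrightarrow> \<not> coords_le u x N) at_bot"
    if f: "f \<in> A" for f
  proof -
    obtain w where "w \<in> W" "qmap u w = qmap u f" using f by (auto simp: A_def)
    then have "\<not> (\<forall>N. \<exists>x\<in>M. qmap u x = qmap u (y - f) \<and> coords_le u x N)"
      using none qmap_diff_cong[OF refl, of u w f y] by (auto simp flip: Minf_class_iff)
    then obtain N0 where "\<forall>x\<in>M. qmap u x = qmap u (y - f) \<longrightarrow> \<not> coords_le u x N0" by blast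
    then show ?thesis unfolding eventually_at_bot_linorder by (meson coords_le_mono)
  qed
  moreover have "finite A" using assms(2) by (simp add: A_def)
  ultimately have "eventually (\<lambda>N. \<forall>f\<in>A. \<forall>x\<in>M. qmap u x = qmap u (y - f) \<longrightarrow> \<not> coords_le u x N) at_bot"
    by (simp add: eventually_ball_finite)
  then obtain N where N: "\<forall>f\<in>A. \<forall>x\<in>M. qmap u x = qmap u (y - f) \<longrightarrow> \<not> coords_le u x N"
    by (auto simp: eventually_at_bot_linorder)
  have "finite ((\<lambda>(f, i). of_rat (coords u (y - f) $ i) - N) ` (F \<times> UNIV))"
    using assms(2) by simp
  then obtain B where "\<forall>f\<in>F. \<forall>i. of_rat (coords u (y - f) $ i) - N \<le> B"
    using bdd_above_finite unfolding bdd_above_def by fastforce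
  then obtain K :: int where K: "\<forall>f\<in>F. \<forall>i. of_rat (coords u (y - f) $ i) - N \<le> of_int K"
    by (meson le_of_int_ceiling order.trans)
  obtain m w where mw: "m \<in> M" "w \<in> W" "y - lincomb u (\<lambda>_. K) = m + w"
    using assms(1) by (force simp: sumset_def)
  then obtain f p where fp: "f \<in> F" "p \<in> Pcone u" "w = f + p"
    using assms(3) by (auto simp: sumset_def)
  have m: "m = (y - f) - (lincomb u (\<lambda>_. K) + p)" using mw(3) fp(3) by (simp add: algebra_simps)
  have "qmap u w = qmap u f" using fp Pcone_subset_Lat by (auto simp: qmap_eq_iff)
  then have "f \<in> A" using fp(1) mw(2) by (auto simp: A_def)
  moreover have "qmap u m = qmap u (y - f)"
    unfolding qmap_eq_iff m
    using Lat_diff[OF Lat_zero Lat_add[OF lincomb_in_Lat Pcone_subset_Lat[THEN subsetD, OF fp(2)]]]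
    by (simp add: algebra_simps)
  moreover have "coords_le u m N"
  proof -
    have le: "coords u m $ i \<le> coords u (y - f) $ i - of_int K" for i
      using fp(2) by (simp add: m coords_diff coords_add coords_lincomb Pcone_iff_coords)
    show ?thesis unfolding coords_le_iff
    proof
      fix i
      have "of_rat (coords u m $ i) \<le> (of_rat (coords u (y - f) $ i - of_int K) :: real)"
        using le by (simp only: of_rat_less_eq)
      also have "\<dots> = of_rat (coords u (y - f) $ i) - of_int K" by (simp add: of_rat_diff)
      also have "\<dots> \<le> N" using K fp(1) by (metis diff_le_eq add.commute)
      finally show "of_rat (coords u m $ i) \<le> N" .
    qed
  qed
  ultimately show False using N mw(1) by blast
qed

lemma qmap_sumset_calM_eq_range:
  assumes "sumset M W = UNIV" "finite F" "W \<subseteq> sumset F (Pcone u)"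
    and "qmap u ` calM = qmap u ` Minf u M"
  shows "qmap u ` sumset calM (calW u W \<union> scrW1 u W) = range (qmap u)"
proof -
  have "qmap u y \<in> qmap u ` sumset calM (calW u W \<union> scrW1 u W)" for y
  proof -
    obtain w m0 where w: "w \<in> W" and m0: "m0 \<in> Minf u M" "qmap u m0 = qmap u (y - w)"
      using Minf_meets_class_minus_W[OF assms(1-3)] by blast
    obtain m where m: "m \<in> calM" "qmap u m = qmap u m0" using assms(4) m0(1) by (metis imageE imageI)
    obtain w' where w': "w' \<in> calW u W \<union> scrW1 u W" "qmap u w' = qmap u w"
      using W_congruent_calW_or_scrW1[OF assms(2,3) w] by blast
    have "qmap u (m + w') = qmap u ((y - w) + w)"
      using m(2) m0(2) w'(2) by (simp add: qmap_add_cong)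
    then show ?thesis using m(1) w'(1) by (auto simp: sumset_def)
  qed
  then show ?thesis by auto
qed

lemma Minf_scrW1_witness:
  assumes "is_minimal_complement M W" "m \<in> Minf u M"
  shows "\<exists>w\<in>scrW1 u W. \<forall>m'\<in>Minf u M. \<forall>w'\<in>calW u W. qmap u (m + w) \<noteq> qmap u (m' + w')"
proof -
  have "m \<in> M" using assms(2) by (simp add: Minf_iff)
  then obtain w where w: "w \<in> W" "m + w \<notin> sumset (M - {m}) W"
    using minimal_complement_essential[OF assms(1)] by blast
  have avoid: "qmap u (m + w) \<noteq> qmap u (m' + w')" if "m' \<in> Minf u M" "w' \<in> W - scrW u W" for m' w'
  proof
    assume "qmap u (m + w) = qmap u (m' + w')"
    then have "qmap u (m + w - w') = qmap u m'" using qmap_diff_cong[OF _ refl, of u "m + w" "m' + w'" w'] by simp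
    then have "m + w - w' + w' \<in> sumset (M - {m}) W" using Minf_class_add_periodic_mem_sumset[OF that(1) _ that(2)] by blast
    then show False using w(2) by simp
  qed
  have "w \<in> scrW u W" using avoid[OF assms(2)] w(1) by blast
  moreover have "qmap u w \<noteq> qmap u w'" if "w' \<in> calW u W" for w'
    using avoid[OF assms(2), of w'] calW_subset that qmap_add_cong[OF refl, of u w w' m] by blast
  ultimately have "w \<in> scrW1 u W" by (simp add: scrW1_def)
  then show ?thesis using avoid calW_subset by blast
qed

end

theorem theorem4p9:
  fixes u :: "'d::finite \<Rightarrow> int ^ 'd"
    and W M calM :: "(int ^ 'd) set"
  assumes "no_Z_relation u"
    and "eventually_periodic u W"
    and "is_minimal_complement M W"
    and "calM \<subseteq> Minf u M"
    and "bij_betw (qmap u) calM (qmap u ` Minf u M)"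
  shows "infinite (Minf u M) \<and> calM \<noteq> {} \<and> finite calM \<and> scrW1 u W \<noteq> {} \<and>
         qmap u ` sumset calM (calW u W \<union> scrW1 u W) = range (qmap u) \<and>
         (\<forall>m \<in> calM. \<exists>w \<in> scrW1 u W. \<forall>m' \<in> calM. \<forall>w' \<in> calW u W.
           qmap u (m + w) \<noteq> qmap u (m' + w'))"
proof -
  note nz = assms(1)
  obtain F where F: "finite F" "W \<subseteq> sumset F (Pcone u)"
    using assms(2) by (auto simp: eventually_periodic_def)
  have MW: "sumset M W = UNIV"
    using assms(3) by (simp add: is_minimal_complement_def is_complement_def)
  have classes: "qmap u ` calM = qmap u ` Minf u M"
    using assms(5) by (rule bij_betw_imp_surj_on)
  have Minf_ne: "Minf u M \<noteq> {}" using Minf_meets_class_minus_W[OF nz MW F] by blast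
  then have calM_ne: "calM \<noteq> {}" using classes by auto
  have witness: "\<forall>m\<in>calM. \<exists>w\<in>scrW1 u W. \<forall>m'\<in>calM. \<forall>w'\<in>calW u W. qmap u (m + w) \<noteq> qmap u (m' + w')"
  proof
    fix m assume "m \<in> calM"
    then obtain w where "w \<in> scrW1 u W"
      and "\<forall>m'\<in>Minf u M. \<forall>w'\<in>calW u W. qmap u (m + w) \<noteq> qmap u (m' + w')"
      using Minf_scrW1_witness[OF nz assms(3)] assms(4) by blast
    then show "\<exists>w\<in>scrW1 u W. \<forall>m'\<in>calM. \<forall>w'\<in>calW u W. qmap u (m + w) \<noteq> qmap u (m' + w')"
      using assms(4) by blast
  qed
  have "finite (qmap u ` Minf u M)" using finite_range_qmap[OF nz] by (rule finite_subset[rotated]) auto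
  then have "finite calM" using bij_betw_finite[OF assms(5)] by simp
  moreover have "scrW1 u W \<noteq> {}" using witness calM_ne by blast
  ultimately show ?thesis
    using infinite_Minf[OF nz Minf_ne] calM_ne qmap_sumset_calM_eq_range[OF nz MW F classes] witness
    by (intro conjI)
qed

end
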